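(* Let $X$ be an $E\mathcal M$-simplicial set, let $x\in X_n$ be co-infinitely supported, let $u_0,\dots,u_n\in\mathcal M$, let $0\le k\le n$, and let $A\subset\omega$ be co-infinite such that $(u_0,\dots,u_n).x$ is $k$-supported on $u_k(A)$. Then $x$ is $k$-supported on $A$.
   Context: $\omega=\{1,2,\dots\}$, $\mathcal M$ the monoid of injections $\omega\to\omega$, $\mathcal M_A$ the submonoid fixing $A\subset\omega$ elementwise; $A$ co-infinite if $\omega\setminus A$ is infinite. $E\mathcal M$ is the simplicial monoid with $(E\mathcal M)_n=\mathcal M^{1+n}$, pointwise multiplication, structure maps by precomposition; an $E\mathcal M$-simplicial set is a simplicial set with left $E\mathcal M$-action. $x\in X_n$ is $k$-supported on $A$ if $i_k(g).x=x$ for all $g\in\mathcal M_A$, where $i_k\colon\mathcal M\to\mathcal M^{1+n}$ is the inclusion of the $(1+k)$-th factor. $x$ is co-infinitely supported if for every $0\le k\le n$ there exists a co-infinite $A_k$ on which $x$ is $k$-supported. *)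

theory Defs
  imports Main
begin

text \<open>The countably infinite set omega is modelled by the type nat (a relabelling of {1,2,...}).
  The monoid M of injections omega -> omega, with composition as multiplication.\<close>

definition M :: "(nat \<Rightarrow> nat) set" where
  "M = {f. inj f}"

definition M_fix :: "nat set \<Rightarrow> (nat \<Rightarrow> nat) set" where
  "M_fix A = {f \<in> M. \<forall>a\<in>A. f a = a}"

definition coinfinite :: "nat set \<Rightarrow> bool" where
  "coinfinite A \<longleftrightarrow> infinite (UNIV - A)"

text \<open>Simplicial operators: monotone maps alpha : [m] -> [n], [m] = {0..m}.\<close>
definition simp_op :: "nat \<Rightarrow> nat \<Rightarrow> (nat \<Rightarrow> nat) \<Rightarrow> bool" where
  "simp_op m n \<alpha> \<longleftrightarrow> (\<forall>i\<le>m. \<alpha> i \<le> n) \<and> (\<forall>i j. i \<le> j \<and> j \<le> m \<longrightarrow> \<alpha> i \<le> \<alpha> j)"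

text \<open>A simplicial set: levels X n, and for each alpha : [m] -> [n] a map
  F m n alpha : X n -> X m (contravariant functor on the simplex category).\<close>
definition simplicial_set ::
  "(nat \<Rightarrow> 'a set) \<Rightarrow> (nat \<Rightarrow> nat \<Rightarrow> (nat \<Rightarrow> nat) \<Rightarrow> 'a \<Rightarrow> 'a) \<Rightarrow> bool" where
  "simplicial_set X F \<longleftrightarrow>
     (\<forall>m n \<alpha> x. simp_op m n \<alpha> \<and> x \<in> X n \<longrightarrow> F m n \<alpha> x \<in> X m) \<and>
     (\<forall>m n \<alpha> \<alpha>' x. simp_op m n \<alpha> \<and> (\<forall>i\<le>m. \<alpha> i = \<alpha>' i) \<and> x \<in> X n
         \<longrightarrow> F m n \<alpha> x = F m n \<alpha>' x) \<and>
     (\<forall>n x. x \<in> X n \<longrightarrow> F n n id x = x) \<and>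
     (\<forall>l m n \<alpha> \<beta> x. simp_op m n \<alpha> \<and> simp_op l m \<beta> \<and> x \<in> X n
         \<longrightarrow> F l n (\<alpha> \<circ> \<beta>) x = F l m \<beta> (F m n \<alpha> x))"

text \<open>An element of (EM)_n = M^(1+n) is a function g : nat => (nat => nat) with
  g i \<in> M for i \<le> n (only the components 0..n matter).\<close>
definition EM_elem :: "nat \<Rightarrow> (nat \<Rightarrow> nat \<Rightarrow> nat) \<Rightarrow> bool" where
  "EM_elem n g \<longleftrightarrow> (\<forall>i\<le>n. g i \<in> M)"

text \<open>An EM-simplicial set: a simplicial set with a levelwise left action
  act n : M^(1+n) x X n -> X n (pointwise multiplication), compatible with the
  structure maps, where alpha^* (g_0..g_n) = (g_alpha(0), .., g_alpha(m)).\<close>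
definition EM_sset ::
  "(nat \<Rightarrow> 'a set) \<Rightarrow> (nat \<Rightarrow> nat \<Rightarrow> (nat \<Rightarrow> nat) \<Rightarrow> 'a \<Rightarrow> 'a)
     \<Rightarrow> (nat \<Rightarrow> (nat \<Rightarrow> nat \<Rightarrow> nat) \<Rightarrow> 'a \<Rightarrow> 'a) \<Rightarrow> bool" where
  "EM_sset X F act \<longleftrightarrow>
     simplicial_set X F \<and>
     (\<forall>n g x. EM_elem n g \<and> x \<in> X n \<longrightarrow> act n g x \<in> X n) \<and>
     (\<forall>n g g' x. EM_elem n g \<and> (\<forall>i\<le>n. g i = g' i) \<and> x \<in> X n \<longrightarrow> act n g x = act n g' x) \<and>
     (\<forall>n x. x \<in> X n \<longrightarrow> act n (\<lambda>i. id) x = x) \<and>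
     (\<forall>n g h x. EM_elem n g \<and> EM_elem n h \<and> x \<in> X n
         \<longrightarrow> act n g (act n h x) = act n (\<lambda>i. g i \<circ> h i) x) \<and>
     (\<forall>m n \<alpha> g x. simp_op m n \<alpha> \<and> EM_elem n g \<and> x \<in> X n
         \<longrightarrow> F m n \<alpha> (act n g x) = act m (\<lambda>j. g (\<alpha> j)) (F m n \<alpha> x))"

definition incl :: "nat \<Rightarrow> (nat \<Rightarrow> nat) \<Rightarrow> nat \<Rightarrow> nat \<Rightarrow> nat" where
  "incl k g = (\<lambda>i. if i = k then g else id)"

definition k_supported ::
  "(nat \<Rightarrow> (nat \<Rightarrow> nat \<Rightarrow> nat) \<Rightarrow> 'a \<Rightarrow> 'a) \<Rightarrow> nat \<Rightarrow> nat \<Rightarrow> nat set \<Rightarrow> 'a \<Rightarrow> bool" where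
  "k_supported act n k A x \<longleftrightarrow> (\<forall>g\<in>M_fix A. act n (incl k g) x = x)"

definition coinf_supported ::
  "(nat \<Rightarrow> (nat \<Rightarrow> nat \<Rightarrow> nat) \<Rightarrow> 'a \<Rightarrow> 'a) \<Rightarrow> nat \<Rightarrow> 'a \<Rightarrow> bool" where
  "coinf_supported act n x \<longleftrightarrow> (\<forall>k\<le>n. \<exists>A. coinfinite A \<and> k_supported act n k A x)"

end

theory Submission
  imports Defs "HOL-Library.Infinite_Set"
begin

text \<open>Choose v in M^(1+n) such that each v_j u_j fixes a co-infinite support B_j of x and
  v_k maps u_k(A) into A; co-infiniteness of B_j leaves room to extend v_j injectively off the
  range of u_j. Then x = v.(u.x), so it suffices that supports are transported by the action:
  if y is k-supported on a co-infinite S, then v.y is k-supported on v_k(S). This holds because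
  the k-th factor acts on such y only through its restriction to S.\<close>

lemma coinfinite_image:
  assumes "inj f" "coinfinite A"
  shows "coinfinite (f ` A)"
proof -
  have "f ` (- A) \<subseteq> - (f ` A)"
    using assms(1) by (auto simp: inj_eq)
  moreover have "infinite (f ` (- A))"
    using assms by (simp add: coinfinite_def Compl_eq_Diff_UNIV finite_image_iff inj_on_subset)
  ultimately show ?thesis
    by (simp add: coinfinite_def Compl_eq_Diff_UNIV infinite_super)
qed

lemma inj_self_map_with_coinfinite_range:
  fixes D :: "nat set"
  assumes "infinite D"
  obtains w where "inj w" "\<forall>z. z \<notin> D \<longrightarrow> w z = z" "w ` D \<subseteq> D" "coinfinite (range w)"
proof
  define e where "e = enumerate D"
  have e: "bij_betw e UNIV D"
    unfolding e_def using bij_enumerate[OF assms] .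
  then have "inj e"
    by (simp add: bij_betw_def)
  define w where "w z = (if z \<in> D then e (2 * inv e z) else z)" for z
  have inj_D: "inj_on (\<lambda>z. e (2 * inv e z)) D"
    using inj_on_inv_into[of D e UNIV] e
    by (auto simp: bij_betw_def inj_on_def inj_eq[OF \<open>inj e\<close>])
  have in_D: "e (2 * inv e z) \<in> D" for z
    using e by (auto simp: bij_betw_def)
  show "inj w"
  proof (rule injI)
    fix a b
    assume "w a = w b"
    then show "a = b"
      using in_D inj_onD[OF inj_D, of a b] unfolding w_def
      by (cases "a \<in> D"; cases "b \<in> D") (simp_all, metis+)
  qed
  show "\<forall>z. z \<notin> D \<longrightarrow> w z = z" "w ` D \<subseteq> D"
    using in_D by (auto simp: w_def)
  have "e (2 * k + 1) \<notin> range w" for k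
  proof
    assume "e (2 * k + 1) \<in> range w"
    then obtain z where "e (2 * k + 1) = w z"
      by blast
    moreover have "e (2 * k + 1) \<in> D"
      using e by (auto simp: bij_betw_def)
    ultimately have "2 * k + 1 = 2 * inv e z"
      using \<open>inj e\<close> by (auto simp: w_def inj_eq split: if_splits)
    then show False
      by presburger
  qed
  then have "range (\<lambda>k. e (2 * k + 1)) \<subseteq> UNIV - range w"
    by (simp add: image_subset_iff)
  moreover have "infinite (range (\<lambda>k. e (2 * k + 1)))"
    by (intro range_inj_infinite inj_onI) (simp add: inj_eq[OF \<open>inj e\<close>])
  ultimately show "coinfinite (range w)"
    unfolding coinfinite_def by (rule infinite_super)
qed

lemma inj_fixing_with_coinfinite_range:
  assumes "coinfinite B"
  obtains w where "inj w" "\<forall>b\<in>B. w b = b" "w ` A \<subseteq> A" "coinfinite (range w)"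
proof -
  have "infinite (- B)"
    using assms by (simp add: coinfinite_def Compl_eq_Diff_UNIV)
  obtain D where D: "infinite D" "D \<subseteq> - B" "D \<subseteq> A \<or> D \<subseteq> - A"
  proof (cases "finite (- B \<inter> A)")
    case True
    have "- B - A = - B - (- B \<inter> A)"
      by blast
    then have "infinite (- B - A)"
      using Diff_infinite_finite[OF True \<open>infinite (- B)\<close>] by simp
    then show thesis
      using that[of "- B - A"] by blast
  next
    case False
    then show thesis
      using that[of "- B \<inter> A"] by blast
  qed
  obtain w where w: "inj w" "\<forall>z. z \<notin> D \<longrightarrow> w z = z" "w ` D \<subseteq> D" "coinfinite (range w)"
    using inj_self_map_with_coinfinite_range[OF \<open>infinite D\<close>] by blast
  have "\<forall>b\<in>B. w b = b"
    using D(2) w(2) by auto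
  moreover have "w ` A \<subseteq> A"
    using D(3) w(2,3) by (auto simp: image_subset_iff)
  ultimately show thesis
    using that w(1,4) by simp
qed

lemma inj_left_inverse_on:
  fixes u :: "nat \<Rightarrow> nat"
  assumes "inj u" "coinfinite B"
  obtains v where "inj v" "\<forall>b\<in>B. v (u b) = b" "v ` u ` A \<subseteq> A"
proof -
  obtain w where w: "inj w" "\<forall>b\<in>B. w b = b" "w ` A \<subseteq> A" "coinfinite (range w)"
    using inj_fixing_with_coinfinite_range[OF assms(2)] by blast
  define c where "c = enumerate (- range w)"
  have c: "inj c" "range c \<subseteq> - range w"
    using w(4) enumerate_in_set[of "- range w"] inj_enumerate[of "- range w"]
    by (auto simp: c_def coinfinite_def Compl_eq_Diff_UNIV)
  define v where "v z = (if z \<in> range u then w (inv u z) else c z)" for z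
  have vu: "v (u z) = w z" for z
    using assms(1) by (simp add: v_def)
  have "inj v"
  proof (rule injI)
    fix a b
    assume "v a = v b"
    then show "a = b"
      using w(1) c assms(1) unfolding v_def
      by (auto simp: inj_eq split: if_splits)
  qed
  moreover have "\<forall>b\<in>B. v (u b) = b" "v ` u ` A \<subseteq> A"
    using vu w(2,3) by (auto simp: image_image)
  ultimately show thesis
    using that by blast
qed

lemma inj_extension_covering_images:
  fixes p q :: "nat \<Rightarrow> nat"
  assumes "inj p" "inj q" "coinfinite S" "\<forall>z\<in>S. p z = q z"
  obtains r where "inj r" "\<forall>z\<in>S. r z = p z" "p ` (- S) \<subseteq> r ` (- S)" "q ` (- S) \<subseteq> r ` (- S)"
proof -
  define T where "T = p ` (- S) \<union> q ` (- S)"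
  have "infinite (- S)"
    using assms(3) by (simp add: coinfinite_def Compl_eq_Diff_UNIV)
  then have "infinite T"
    using assms(1) by (simp add: T_def finite_image_iff inj_on_subset)
  obtain h where h: "bij_betw h (- S) T"
    using bij_betw_trans[OF bij_betw_inv_into[OF bij_enumerate[OF \<open>infinite (- S)\<close>]]
        bij_enumerate[OF \<open>infinite T\<close>]] by blast
  have p_S_disjoint: "p z \<notin> T" if "z \<in> S" for z
    using that assms(1,2,4) by (auto simp: T_def inj_eq)
  define r where "r z = (if z \<in> S then p z else h z)" for z
  have r_S: "inj_on r S" "r ` S = p ` S"
    using inj_on_subset[OF assms(1) subset_UNIV] by (auto simp: r_def inj_on_def)
  have r_compl: "bij_betw r (- S) T"
    using h by (rule bij_betw_cong[THEN iffD2, rotated]) (simp add: r_def)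
  have "inj_on r (S \<union> - S)"
    unfolding inj_on_Un using r_S r_compl p_S_disjoint by (auto simp: bij_betw_def)
  then show thesis
    using that r_compl by (auto simp: r_def T_def bij_betw_def)
qed

lemma inj_factor_through:
  fixes p r :: "nat \<Rightarrow> nat"
  assumes "inj p" "\<forall>z\<in>S. r z = p z" "p ` (- S) \<subseteq> r ` (- S)"
  obtains \<tau> where "\<tau> \<in> M_fix S" "p = r \<circ> \<tau>"
proof -
  define \<tau> where "\<tau> z = (if z \<in> S then z else inv_into (- S) r (p z))" for z
  have "p = r \<circ> \<tau>"
    using assms(2,3) unfolding fun_eq_iff by (auto simp: \<tau>_def f_inv_into_f)
  moreover from this have "inj \<tau>"
    using assms(1) by (metis inj_on_imageI2)
  then have "\<tau> \<in> M_fix S"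
    by (simp add: M_fix_def M_def \<tau>_def)
  ultimately show thesis
    using that by blast
qed

lemma id_in_M: "id \<in> M"
  by (simp add: M_def)

lemma EM_elem_incl: "g \<in> M \<Longrightarrow> EM_elem n (incl k g)"
  by (simp add: EM_elem_def incl_def id_in_M)

lemma act_closed: "EM_sset X F act \<Longrightarrow> EM_elem n g \<Longrightarrow> x \<in> X n \<Longrightarrow> act n g x \<in> X n"
  unfolding EM_sset_def by blast

lemma act_cong:
  "EM_sset X F act \<Longrightarrow> EM_elem n g \<Longrightarrow> \<forall>i\<le>n. g i = g' i \<Longrightarrow> x \<in> X n \<Longrightarrow> act n g x = act n g' x"
  unfolding EM_sset_def by blast

lemma act_id: "EM_sset X F act \<Longrightarrow> x \<in> X n \<Longrightarrow> act n (\<lambda>i. id) x = x"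
  unfolding EM_sset_def by blast

lemma act_comp:
  "EM_sset X F act \<Longrightarrow> EM_elem n g \<Longrightarrow> EM_elem n h \<Longrightarrow> x \<in> X n \<Longrightarrow>
    act n g (act n h x) = act n (\<lambda>i. g i \<circ> h i) x"
  unfolding EM_sset_def by blast

lemma k_supported_subset:
  "k_supported act n k A x \<Longrightarrow> A \<subseteq> A' \<Longrightarrow> k_supported act n k A' x"
  unfolding k_supported_def M_fix_def by auto

lemma act_eq_self_if_fixing_supports:
  assumes em: "EM_sset X F act" and x: "x \<in> X n"
    and supp: "\<forall>j\<le>n. k_supported act n j (B j) x"
    and w: "\<forall>j\<le>n. w j \<in> M_fix (B j)"
  shows "act n w x = x"
proof -
  define w_upto where "w_upto m = (\<lambda>j. if j < m then w j else id)" for m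
  have w_M: "\<forall>j\<le>n. w j \<in> M"
    using w by (simp add: M_fix_def)
  have w_upto_EM: "EM_elem n (w_upto m)" for m
    using w_M id_in_M by (simp add: w_upto_def EM_elem_def)
  have "act n (w_upto m) x = x" for m
  proof (induction m)
    case 0
    have "w_upto 0 = (\<lambda>i. id)"
      by (simp add: w_upto_def)
    then show ?case
      using act_id[OF em x] by (simp only:)
  next
    case (Suc m)
    show ?case
    proof (cases "m \<le> n")
      case True
      then have w_m: "w m \<in> M"
        using w_M by simp
      have "w_upto (Suc m) = (\<lambda>j. w_upto m j \<circ> incl m (w m) j)"
        by (auto simp: w_upto_def incl_def)
      then have "act n (w_upto (Suc m)) x = act n (w_upto m) (act n (incl m (w m)) x)"
        using act_comp[OF em w_upto_EM EM_elem_incl[OF w_m] x] by simp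
      also have "act n (incl m (w m)) x = x"
        using supp w True unfolding k_supported_def by blast
      finally show ?thesis
        using Suc by simp
    next
      case False
      then have "act n (w_upto (Suc m)) x = act n (w_upto m) x"
        by (intro act_cong[OF em w_upto_EM _ x]) (auto simp: w_upto_def)
      then show ?thesis
        using Suc by simp
    qed
  qed
  moreover have "act n w x = act n (w_upto (Suc n)) x"
    using w_M by (intro act_cong[OF em _ _ x]) (auto simp: w_upto_def EM_elem_def)
  ultimately show ?thesis
    by simp
qed

lemma act_incl_eq_if_agree_on_support:
  assumes em: "EM_sset X F act" and y: "y \<in> X n"
    and supp: "k_supported act n k S y" and "coinfinite S"
    and "p \<in> M" "q \<in> M" "\<forall>z\<in>S. p z = q z"
  shows "act n (incl k p) y = act n (incl k q) y"
proof -
  \<comment> \<open>p and q both factor as r \<circ> \<tau> with \<tau> \<in> M_fix S, and such \<tau> acts trivially on y\<close>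
  obtain r where r: "inj r" "\<forall>z\<in>S. r z = p z" "p ` (- S) \<subseteq> r ` (- S)" "q ` (- S) \<subseteq> r ` (- S)"
    using inj_extension_covering_images[of p q S] assms(4-7) unfolding M_def by blast
  have "act n (incl k f) y = act n (incl k r) y"
    if f: "f \<in> M" "\<forall>z\<in>S. r z = f z" "f ` (- S) \<subseteq> r ` (- S)" for f
  proof -
    obtain \<tau> where \<tau>: "\<tau> \<in> M_fix S" "f = r \<circ> \<tau>"
      using inj_factor_through[of f S r] f unfolding M_def by blast
    then have "incl k f = (\<lambda>i. incl k r i \<circ> incl k \<tau> i)"
      by (auto simp: incl_def)
    moreover have "r \<in> M" "\<tau> \<in> M"
      using r(1) \<tau>(1) by (simp_all add: M_def M_fix_def)
    ultimately have "act n (incl k f) y = act n (incl k r) (act n (incl k \<tau>) y)"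
      using act_comp[OF em EM_elem_incl EM_elem_incl y] by simp
    also have "\<dots> = act n (incl k r) y"
      using supp \<tau>(1) unfolding k_supported_def by simp
    finally show ?thesis .
  qed
  then show ?thesis
    using r assms(5-7) by (metis (no_types, lifting))
qed

lemma k_supported_act:
  assumes em: "EM_sset X F act" and y: "y \<in> X n" and v: "EM_elem n v" and "k \<le> n"
    and supp: "k_supported act n k S y" and "coinfinite S"
  shows "k_supported act n k (v k ` S) (act n v y)"
  unfolding k_supported_def
proof
  fix g
  assume g: "g \<in> M_fix (v k ` S)"
  define v' where "v' = v(k := id)"
  have v'_EM: "EM_elem n v'"
    using v id_in_M by (simp add: v'_def EM_elem_def)
  have vk_M: "v k \<in> M" and gvk_M: "g \<circ> v k \<in> M"
    using v g \<open>k \<le> n\<close> by (auto simp: EM_elem_def M_fix_def M_def inj_compose)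
  have "act n (incl k g) (act n v y) = act n (\<lambda>i. incl k g i \<circ> v i) y"
    using act_comp[OF em EM_elem_incl v y] g by (simp add: M_fix_def)
  also have "(\<lambda>i. incl k g i \<circ> v i) = (\<lambda>i. v' i \<circ> incl k (g \<circ> v k) i)"
    by (auto simp: incl_def v'_def)
  also have "act n \<dots> y = act n v' (act n (incl k (g \<circ> v k)) y)"
    using act_comp[OF em v'_EM EM_elem_incl[OF gvk_M] y] by simp
  also have "act n (incl k (g \<circ> v k)) y = act n (incl k (v k)) y"
    using g by (intro act_incl_eq_if_agree_on_support[OF em y supp \<open>coinfinite S\<close> gvk_M vk_M])
      (auto simp: M_fix_def)
  also have "act n v' (act n (incl k (v k)) y) = act n (\<lambda>i. v' i \<circ> incl k (v k) i) y"
    using act_comp[OF em v'_EM EM_elem_incl[OF vk_M] y] by simp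
  also have "(\<lambda>i. v' i \<circ> incl k (v k) i) = v"
    by (auto simp: incl_def v'_def)
  finally show "act n (incl k g) (act n v y) = act n v y" .
qed

lemma EM_elem_left_inverse_on_supports:
  assumes "EM_elem n u" "\<forall>j\<le>n. coinfinite (B j)"
  obtains v where "EM_elem n v" "\<forall>j\<le>n. v j \<circ> u j \<in> M_fix (B j)" "\<forall>j\<le>n. v j ` u j ` A \<subseteq> A"
proof -
  have "\<forall>j\<le>n. \<exists>v\<^sub>j. inj v\<^sub>j \<and> (\<forall>b\<in>B j. v\<^sub>j (u j b) = b) \<and> v\<^sub>j ` u j ` A \<subseteq> A"
    using assms inj_left_inverse_on unfolding EM_elem_def M_def by (metis mem_Collect_eq)
  then obtain v where v: "\<forall>j\<le>n. inj (v j) \<and> (\<forall>b\<in>B j. v j (u j b) = b) \<and> v j ` u j ` A \<subseteq> A"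
    by metis
  show thesis
    using that[of v] v assms(1) by (auto simp: EM_elem_def M_fix_def M_def inj_compose)
qed

theorem lemma2p26:
  fixes X :: "nat \<Rightarrow> 'a set"
    and F :: "nat \<Rightarrow> nat \<Rightarrow> (nat \<Rightarrow> nat) \<Rightarrow> 'a \<Rightarrow> 'a"
    and act :: "nat \<Rightarrow> (nat \<Rightarrow> nat \<Rightarrow> nat) \<Rightarrow> 'a \<Rightarrow> 'a"
    and u :: "nat \<Rightarrow> nat \<Rightarrow> nat"
  assumes "EM_sset X F act"
    and "x \<in> X n"
    and "coinf_supported act n x"
    and "EM_elem n u"
    and "k \<le> n"
    and "coinfinite A"
    and "k_supported act n k (u k ` A) (act n u x)"
  shows "k_supported act n k A x"
proof -
  note em = assms(1) and x = assms(2)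
  obtain B where B: "\<forall>j\<le>n. coinfinite (B j)" "\<forall>j\<le>n. k_supported act n j (B j) x"
    using assms(3) unfolding coinf_supported_def by metis
  obtain v where v: "EM_elem n v" "\<forall>j\<le>n. v j \<circ> u j \<in> M_fix (B j)" "\<forall>j\<le>n. v j ` u j ` A \<subseteq> A"
    using EM_elem_left_inverse_on_supports[OF assms(4) B(1)] by blast
  have "act n v (act n u x) = x"
    using act_comp[OF em v(1) assms(4) x] act_eq_self_if_fixing_supports[OF em x B(2) v(2)] by simp
  moreover have "coinfinite (u k ` A)"
    using assms(4-6) coinfinite_image by (simp add: EM_elem_def M_def)
  then have "k_supported act n k (v k ` u k ` A) (act n v (act n u x))"
    using k_supported_act[OF em act_closed[OF em assms(4) x] v(1) assms(5,7)] by blast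
  ultimately show ?thesis
    using k_supported_subset v(3) assms(5) by metis
qed

end
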